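(* Let $e_k(x)=x^k$ for $k\in\{0,1,2\}$, $x\in[0,1]$, and let $A:C([0,1])\to C([0,1])$ be a weakly nonlinear and monotone operator with $A(1)(x)>0$ for all $x\in[0,1]$. Let $T_n:C([0,1])\to C([0,1])$ ($n\ge1$) be weakly nonlinear and monotone operators. Put $M=\big(\inf_{x\in[0,1]}A(1)(x)\big)^{-1}$ and $$\mu_n=\|T_n(e_2)A(1)-2T_n(-e_1)A(-e_1)+T_n(1)A(e_2)\|^{1/2}.$$ Then for every $f\in C([0,1])$ and $n\ge1$, $$\|T_n(f)-A(f)\|\le M\big\{\|T_n(1)-A(1)\|\cdot\|A(f)\|+(\|T_n(1)A(1)\|+1)\,\omega(f,\mu_n)\big\}.$$ If moreover $T_n(1)=A(1)$, then $\|T_n(f)-A(f)\|\le M\big(\|A(1)^2\|+1\big)\,\omega(f,\mu_n)$.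
   Context: $C([0,1])$ is the space of continuous real functions on $[0,1]$ with pointwise order and sup norm $\|g\|=\sup_{x\in[0,1]}|g(x)|$; products are pointwise and $1=e_0$ is the constant function one. An operator $T:C([0,1])\to C([0,1])$ is weakly nonlinear if $T(f+g)\le T(f)+T(g)$ and $T(\alpha f)=\alpha T(f)$ for all $f,g$ and $\alpha\ge0$, and $T(f+\alpha\cdot1)=T(f)+\alpha T(1)$ for all $f$ and $\alpha\ge0$. $T$ is monotone if $f\le g$ implies $T(f)\le T(g)$. The modulus of continuity is $\omega(f,\delta)=\sup\{|f(x)-f(y)|:x,y\in[0,1],|x-y|\le\delta\}$ for $\delta>0$, with $\omega(f,0)=0$. *)

theory Defs
  imports "HOL-Analysis.Analysis"
begin

text \<open>Elements of C([0,1]) are represented by functions real => real that are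
continuous on [0,1]; only their values on [0,1] matter. Order, equality and
the sup norm are all taken on [0,1].\<close>

definition C01 :: "(real \<Rightarrow> real) set" where
  "C01 = {f. continuous_on {0..1} f}"

definition norm01 :: "(real \<Rightarrow> real) \<Rightarrow> real" where
  "norm01 g = (SUP x\<in>{0..1}. \<bar>g x\<bar>)"

definition modcont :: "(real \<Rightarrow> real) \<Rightarrow> real \<Rightarrow> real" where
  "modcont f \<delta> = (if \<delta> = 0 then 0 else
     Sup {\<bar>f x - f y\<bar> | x y. x \<in> {0..1} \<and> y \<in> {0..1} \<and> \<bar>x - y\<bar> \<le> \<delta>})"

definition maps_C01 :: "((real \<Rightarrow> real) \<Rightarrow> (real \<Rightarrow> real)) \<Rightarrow> bool" where
  "maps_C01 T = (\<forall>f\<in>C01. T f \<in> C01)"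

definition weakly_nonlinear :: "((real \<Rightarrow> real) \<Rightarrow> (real \<Rightarrow> real)) \<Rightarrow> bool" where
  "weakly_nonlinear T =
    ((\<forall>f\<in>C01. \<forall>g\<in>C01. \<forall>x\<in>{0..1}. T (\<lambda>t. f t + g t) x \<le> T f x + T g x) \<and>
     (\<forall>f\<in>C01. \<forall>\<alpha>::real. \<alpha> \<ge> 0 \<longrightarrow> (\<forall>x\<in>{0..1}. T (\<lambda>t. \<alpha> * f t) x = \<alpha> * T f x)) \<and>
     (\<forall>f\<in>C01. \<forall>\<alpha>::real. \<alpha> \<ge> 0 \<longrightarrow>
        (\<forall>x\<in>{0..1}. T (\<lambda>t. f t + \<alpha>) x = T f x + \<alpha> * T (\<lambda>_. 1) x)))"

definition monotone01 :: "((real \<Rightarrow> real) \<Rightarrow> (real \<Rightarrow> real)) \<Rightarrow> bool" where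
  "monotone01 T = (\<forall>f\<in>C01. \<forall>g\<in>C01. (\<forall>x\<in>{0..1}. f x \<le> g x) \<longrightarrow>
                      (\<forall>x\<in>{0..1}. T f x \<le> T g x))"

end

theory Submission
  imports Defs
begin

text \<open>
  For two monotone weakly nonlinear operators \<open>P\<close> and \<open>R\<close>, every bound
  \<open>f t - f s \<le> E + c (t - s)\<^sup>2\<close> can be pushed through \<open>P\<close> in the variable \<open>t\<close>
  and then through \<open>R\<close> in the variable \<open>s\<close>; only the test functions \<open>1\<close>, \<open>-e\<^sub>1\<close>,
  \<open>e\<^sub>2\<close> appear, and one obtains
  \<open>R(1) P(f) - P(1) R(f) \<le> P(1) R(1) E + c Q\<close> with the cross moment
  \<open>Q = P(e\<^sub>2) R(1) - 2 P(-e\<^sub>1) R(-e\<^sub>1) + P(1) R(e\<^sub>2)\<close>, which is symmetric in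
  \<open>P\<close> and \<open>R\<close>. The modulus of continuity gives such a bound with
  \<open>E = \<omega>(f,\<delta>)\<close>, \<open>c = \<omega>(f,\<delta>)/\<delta>\<^sup>2\<close>; the choice \<open>\<delta>\<^sup>2 = \<parallel>Q\<parallel>\<close> makes both error terms
  \<open>\<omega>(f,\<delta>)\<close>. Writing \<open>P(f) - R(f)\<close> as \<open>(R(1) P(f) - P(1) R(f) + (P(1) - R(1)) R(f)) / R(1)\<close>
  and using \<open>R(1) \<ge> inf R(1)\<close> yields the estimate.
\<close>

subsection \<open>Weakly nonlinear monotone operators\<close>

lemma C01_continuous_intro: "continuous_on {0..1} f \<Longrightarrow> f \<in> C01"
  by (simp add: C01_def)

lemma C01_continuous: "f \<in> C01 \<Longrightarrow> continuous_on {0..1} f"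
  by (simp add: C01_def)

lemma maps_C01_continuous: "maps_C01 W \<Longrightarrow> g \<in> C01 \<Longrightarrow> continuous_on {0..1} (W g)"
  by (simp add: maps_C01_def C01_def)

lemma weakly_nonlinear_subadditive:
  "weakly_nonlinear W \<Longrightarrow> f \<in> C01 \<Longrightarrow> g \<in> C01 \<Longrightarrow> x \<in> {0..1} \<Longrightarrow>
    W (\<lambda>t. f t + g t) x \<le> W f x + W g x"
  unfolding weakly_nonlinear_def by blast

lemma weakly_nonlinear_pos_homogeneous:
  "weakly_nonlinear W \<Longrightarrow> f \<in> C01 \<Longrightarrow> \<alpha> \<ge> 0 \<Longrightarrow> x \<in> {0..1} \<Longrightarrow>
    W (\<lambda>t. \<alpha> * f t) x = \<alpha> * W f x"
  unfolding weakly_nonlinear_def by blast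

lemma weakly_nonlinear_add_const:
  assumes W: "weakly_nonlinear W" and f: "f \<in> C01" and x: "x \<in> {0..1}"
  shows "W (\<lambda>t. f t + K) x = W f x + K * W (\<lambda>_. 1) x"
proof (cases "K \<ge> 0")
  case True
  then show ?thesis
    using W f x unfolding weakly_nonlinear_def by blast
next
  case False
  have "(\<lambda>t. f t + K) \<in> C01"
    using f by (intro C01_continuous_intro continuous_intros) (auto dest: C01_continuous)
  then have "W (\<lambda>t. (f t + K) + (-K)) x = W (\<lambda>t. f t + K) x + (-K) * W (\<lambda>_. 1) x"
    using W x False unfolding weakly_nonlinear_def by (meson neg_0_le_iff_le nle_le)
  then show ?thesis by simp
qed

lemma weakly_nonlinear_zero:
  assumes "weakly_nonlinear W" "x \<in> {0..1}"
  shows "W (\<lambda>_. 0) x = 0"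
  using weakly_nonlinear_pos_homogeneous[OF assms(1) _ order.refl assms(2), of "\<lambda>_. 1"]
  by (simp add: C01_continuous_intro)

lemma weakly_nonlinear_uminus_ge:
  assumes W: "weakly_nonlinear W" and h: "h \<in> C01" and x: "x \<in> {0..1}"
  shows "- W h x \<le> W (\<lambda>t. - h t) x"
proof -
  have "(\<lambda>t. - h t) \<in> C01"
    using h by (intro C01_continuous_intro continuous_intros) (auto dest: C01_continuous)
  from weakly_nonlinear_subadditive[OF W h this x]
  show ?thesis using weakly_nonlinear_zero[OF W x] by simp
qed

lemma weakly_nonlinear_quadratic_le:
  assumes W: "weakly_nonlinear W" and "\<alpha> \<ge> 0" "\<beta> \<ge> 0" and x: "x \<in> {0..1}"
  shows "W (\<lambda>t. \<alpha> * t\<^sup>2 + \<beta> * - t + K) x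
           \<le> \<alpha> * W (\<lambda>t. t\<^sup>2) x + \<beta> * W (\<lambda>t. - t) x + K * W (\<lambda>_. 1) x"
proof -
  have C01: "(\<lambda>t::real. t\<^sup>2) \<in> C01" "(\<lambda>t::real. - t) \<in> C01"
    "(\<lambda>t::real. \<alpha> * t\<^sup>2) \<in> C01" "(\<lambda>t::real. \<beta> * - t) \<in> C01"
    "(\<lambda>t::real. \<alpha> * t\<^sup>2 + \<beta> * - t) \<in> C01"
    by (intro C01_continuous_intro continuous_intros)+
  have "W (\<lambda>t. \<alpha> * t\<^sup>2 + \<beta> * - t + K) x = W (\<lambda>t. \<alpha> * t\<^sup>2 + \<beta> * - t) x + K * W (\<lambda>_. 1) x"
    by (rule weakly_nonlinear_add_const[OF W C01(5) x])
  also have "W (\<lambda>t. \<alpha> * t\<^sup>2 + \<beta> * - t) x \<le> W (\<lambda>t. \<alpha> * t\<^sup>2) x + W (\<lambda>t. \<beta> * - t) x"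
    by (rule weakly_nonlinear_subadditive[OF W C01(3,4) x])
  also have "W (\<lambda>t. \<alpha> * t\<^sup>2) x = \<alpha> * W (\<lambda>t. t\<^sup>2) x"
    by (rule weakly_nonlinear_pos_homogeneous[OF W C01(1) assms(2) x])
  also have "W (\<lambda>t. \<beta> * - t) x = \<beta> * W (\<lambda>t. - t) x"
    by (rule weakly_nonlinear_pos_homogeneous[OF W C01(2) assms(3) x])
  finally show ?thesis by simp
qed

lemma monotone01_le:
  "monotone01 W \<Longrightarrow> f \<in> C01 \<Longrightarrow> g \<in> C01 \<Longrightarrow> (\<forall>x\<in>{0..1}. f x \<le> g x) \<Longrightarrow>
    x \<in> {0..1} \<Longrightarrow> W f x \<le> W g x"
  unfolding monotone01_def by blast

lemma monotone01_one_nonneg: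
  assumes "weakly_nonlinear W" "monotone01 W" "x \<in> {0..1}"
  shows "0 \<le> W (\<lambda>_. 1) x"
  using monotone01_le[OF assms(2), of "\<lambda>_. 0" "\<lambda>_. 1" x] weakly_nonlinear_zero[OF assms(1,3)] assms(3)
  by (simp add: C01_continuous_intro)

lemma monotone01_uminus_id_nonpos:
  assumes "weakly_nonlinear W" "monotone01 W" "x \<in> {0..1}"
  shows "W (\<lambda>t. - t) x \<le> 0"
  using monotone01_le[OF assms(2), of "\<lambda>t. - t" "\<lambda>_. 0" x] weakly_nonlinear_zero[OF assms(1,3)] assms(3)
  by (simp add: C01_continuous_intro continuous_on_minus)

subsection \<open>The cross moment of two operators\<close>

definition cross_moment ::
  "((real \<Rightarrow> real) \<Rightarrow> (real \<Rightarrow> real)) \<Rightarrow> ((real \<Rightarrow> real) \<Rightarrow> (real \<Rightarrow> real)) \<Rightarrow> real \<Rightarrow> real" where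
  "cross_moment P R x = P (\<lambda>t. t\<^sup>2) x * R (\<lambda>_. 1) x - 2 * P (\<lambda>t. - t) x * R (\<lambda>t. - t) x
     + P (\<lambda>_. 1) x * R (\<lambda>t. t\<^sup>2) x"

lemma cross_moment_commute: "cross_moment R P x = cross_moment P R x"
  by (simp add: cross_moment_def algebra_simps)

lemma cross_moment_continuous:
  assumes "maps_C01 P" "maps_C01 R"
  shows "continuous_on {0..1} (cross_moment P R)"
proof -
  have "(\<lambda>t::real. t\<^sup>2) \<in> C01" "(\<lambda>t::real. - t) \<in> C01" "(\<lambda>_::real. 1::real) \<in> C01"
    by (intro C01_continuous_intro continuous_intros)+
  then show ?thesis
    unfolding cross_moment_def using maps_C01_continuous assms by (intro continuous_intros) auto
qed

lemma commutator_le_cross_moment: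
  assumes wP: "weakly_nonlinear P" and mP: "monotone01 P"
    and wR: "weakly_nonlinear R" and mR: "monotone01 R"
    and f: "f \<in> C01" and x: "x \<in> {0..1}" and c: "c \<ge> 0"
    and quadratic_bound: "\<forall>s\<in>{0..1}. \<forall>t\<in>{0..1}. f t - f s \<le> E + c * (t - s)\<^sup>2"
  shows "R (\<lambda>_. 1) x * P f x - P (\<lambda>_. 1) x * R f x
           \<le> P (\<lambda>_. 1) x * R (\<lambda>_. 1) x * E + c * cross_moment P R x"
proof -
  define a where "a = P (\<lambda>_. 1) x"
  define b where "b = R (\<lambda>_. 1) x"
  define \<tau> where "\<tau> = P (\<lambda>t. - t) x"
  define \<sigma> where "\<sigma> = R (\<lambda>t. - t) x"
  have a: "a \<ge> 0" using monotone01_one_nonneg[OF wP mP x] by (simp add: a_def)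
  have \<tau>: "- \<tau> \<ge> 0" using monotone01_uminus_id_nonpos[OF wP mP x] by (simp add: \<tau>_def)
  have P_upper: "P f x \<le> c * P (\<lambda>t. t\<^sup>2) x + 2 * c * s * \<tau> + (f s + E + c * s\<^sup>2) * a"
    if s: "s \<in> {0..1}" for s
  proof -
    have "\<forall>t\<in>{0..1}. f t \<le> c * t\<^sup>2 + 2 * c * s * - t + (f s + E + c * s\<^sup>2)"
    proof
      fix t :: real assume "t \<in> {0..1}"
      then have "f t - f s \<le> E + c * (t - s)\<^sup>2" using quadratic_bound s by blast
      then show "f t \<le> c * t\<^sup>2 + 2 * c * s * - t + (f s + E + c * s\<^sup>2)"
        by (simp add: power2_diff algebra_simps)
    qed
    then have "P f x \<le> P (\<lambda>t. c * t\<^sup>2 + 2 * c * s * - t + (f s + E + c * s\<^sup>2)) x"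
      by (intro monotone01_le[OF mP f _ _ x] C01_continuous_intro continuous_intros)
    also have "\<dots> \<le> c * P (\<lambda>t. t\<^sup>2) x + 2 * c * s * \<tau> + (f s + E + c * s\<^sup>2) * a"
      using weakly_nonlinear_quadratic_le[OF wP c _ x, of "2 * c * s" "f s + E + c * s\<^sup>2"] s c
      unfolding a_def \<tau>_def by simp
    finally show ?thesis .
  qed
  define K where "K = P f x - a * E - c * P (\<lambda>t. t\<^sup>2) x"
  define h where "h = (\<lambda>s::real. (c * a) * s\<^sup>2 + (2 * c * - \<tau>) * - s)"
  have h: "h \<in> C01" "(\<lambda>s. - h s) \<in> C01"
    unfolding h_def by (intro C01_continuous_intro continuous_intros)+
  have "R (\<lambda>s. - h s) x + K * b = R (\<lambda>s. - h s + K) x"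
    using weakly_nonlinear_add_const[OF wR h(2) x] by (simp add: b_def)
  also have "\<dots> \<le> R (\<lambda>s. a * f s) x"
    using P_upper f h unfolding h_def K_def
    by (intro monotone01_le[OF mR _ _ _ x] C01_continuous_intro continuous_intros)
      (auto simp: algebra_simps dest: C01_continuous)
  also have "\<dots> = a * R f x"
    by (rule weakly_nonlinear_pos_homogeneous[OF wR f a x])
  finally have "R (\<lambda>s. - h s) x + K * b \<le> a * R f x" .
  moreover have "- R h x \<le> R (\<lambda>s. - h s) x"
    by (rule weakly_nonlinear_uminus_ge[OF wR h(1) x])
  moreover have "R h x \<le> c * a * R (\<lambda>t. t\<^sup>2) x + 2 * c * - \<tau> * \<sigma>"
    using weakly_nonlinear_quadratic_le[OF wR _ _ x, of "c * a" "2 * c * - \<tau>" 0] a \<tau> c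
    unfolding h_def \<sigma>_def by (simp add: mult_nonpos_nonneg)
  ultimately show ?thesis
    unfolding K_def cross_moment_def a_def b_def \<tau>_def \<sigma>_def by (simp add: algebra_simps)
qed

subsection \<open>Sup norm and modulus of continuity\<close>

lemma continuous_on_01_abs_bounded:
  assumes "continuous_on {0..1} g"
  shows "\<exists>B. \<forall>x\<in>{0..1::real}. \<bar>g x\<bar> \<le> (B::real)"
proof -
  have "bounded (g ` {0..1})"
    using assms by (intro compact_imp_bounded compact_continuous_image) auto
  then show ?thesis by (auto simp: bounded_iff)
qed

lemma norm01_upper:
  assumes "continuous_on {0..1} g" "x \<in> {0..1}"
  shows "\<bar>g x\<bar> \<le> norm01 g"
proof -
  obtain B where "\<forall>x\<in>{0..1::real}. \<bar>g x\<bar> \<le> B"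
    using continuous_on_01_abs_bounded[OF assms(1)] by blast
  then have "bdd_above ((\<lambda>x. \<bar>g x\<bar>) ` {0..1})" by (intro bdd_aboveI2) auto
  then show ?thesis unfolding norm01_def using assms(2) by (intro cSUP_upper) auto
qed

lemma norm01_nonneg: "continuous_on {0..1} g \<Longrightarrow> 0 \<le> norm01 g"
  using norm01_upper[of g 0] by simp

lemma norm01_least: "(\<forall>x\<in>{0..1}. \<bar>g x\<bar> \<le> K) \<Longrightarrow> norm01 g \<le> K"
  unfolding norm01_def by (intro cSUP_least) auto

lemma norm01_cong: "(\<forall>x\<in>{0..1}. g x = h x) \<Longrightarrow> norm01 g = norm01 h"
  unfolding norm01_def by (intro SUP_cong) auto

lemma modcont_upper:
  assumes f: "continuous_on {0..1} f" and "\<delta> > 0" "x \<in> {0..1}" "y \<in> {0..1}" "\<bar>x - y\<bar> \<le> \<delta>"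
  shows "\<bar>f x - f y\<bar> \<le> modcont f \<delta>"
proof -
  obtain B where B: "\<forall>x\<in>{0..1::real}. \<bar>f x\<bar> \<le> B"
    using continuous_on_01_abs_bounded[OF f] by blast
  have "bdd_above {\<bar>f x - f y\<bar> | x y. x \<in> {0..1} \<and> y \<in> {0..1} \<and> \<bar>x - y\<bar> \<le> \<delta>}"
  proof (rule bdd_aboveI)
    fix z assume "z \<in> {\<bar>f x - f y\<bar> | x y. x \<in> {0..1} \<and> y \<in> {0..1} \<and> \<bar>x - y\<bar> \<le> \<delta>}"
    then obtain x y where "z = \<bar>f x - f y\<bar>" "\<bar>f x\<bar> \<le> B" "\<bar>f y\<bar> \<le> B" using B by blast
    then show "z \<le> 2 * B" by linarith
  qed
  then show ?thesis unfolding modcont_def using assms by (auto intro!: cSup_upper)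
qed

lemma modcont_least:
  assumes "\<delta> > 0" "\<forall>x\<in>{0..1}. \<forall>y\<in>{0..1}. \<bar>x - y\<bar> \<le> \<delta> \<longrightarrow> \<bar>f x - f y\<bar> \<le> K"
  shows "modcont f \<delta> \<le> K"
proof -
  have "\<bar>f 0 - f 0\<bar> \<in> {\<bar>f x - f y\<bar> | x y. x \<in> {0..1} \<and> y \<in> {0..1} \<and> \<bar>x - y\<bar> \<le> \<delta>}"
    using assms(1) by force
  then show ?thesis unfolding modcont_def using assms by (auto intro!: cSup_least)
qed

lemma modcont_nonneg:
  assumes "continuous_on {0..1} f" "\<delta> \<ge> 0"
  shows "0 \<le> modcont f \<delta>"
proof (cases "\<delta> = 0")
  case False
  then show ?thesis using modcont_upper[OF assms(1), of \<delta> 0 0] assms(2) by simp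
qed (simp add: modcont_def)

lemma modcont_tends_to_zero:
  assumes f: "continuous_on {0..1} f" and "\<epsilon> > 0"
  obtains \<delta> where "\<delta> > 0" "modcont f \<delta> \<le> \<epsilon>"
proof -
  have "uniformly_continuous_on {0..1} f"
    using f compact_uniformly_continuous by blast
  then obtain d where d: "d > 0"
    "\<And>x y. x \<in> {0..1} \<Longrightarrow> y \<in> {0..1} \<Longrightarrow> dist y x < d \<Longrightarrow> dist (f y) (f x) < \<epsilon>"
    unfolding uniformly_continuous_on_def using \<open>\<epsilon> > 0\<close> by metis
  have "modcont f (d / 2) \<le> \<epsilon>"
    using d by (intro modcont_least) (auto simp: dist_real_def less_imp_le)
  then show thesis using d(1) by (intro that[of "d / 2"]) auto
qed

lemma modcont_telescope:
  assumes f: "continuous_on {0..1} f" and \<delta>: "\<delta> > 0" and s: "s \<in> {0..1}" and t: "t \<in> {0..1}"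
    and n: "n \<ge> 1" and dist: "\<bar>t - s\<bar> \<le> real n * \<delta>"
  shows "f t - f s \<le> real n * modcont f \<delta>"
proof -
  define p where "p = (\<lambda>i::nat. (1 - real i / real n) * s + (real i / real n) * t)"
  have p_in: "p i \<in> {0..1}" if "i \<le> n" for i
  proof -
    have "0 \<le> real i / real n" "real i / real n \<le> 1" using that n by auto
    then show ?thesis
      using s t unfolding p_def by (auto intro!: convex_bound_le simp del: times_divide_eq_left)
  qed
  have p_step: "p (Suc i) - p i = (t - s) / real n" for i
    unfolding p_def using n by (simp add: field_simps)
  have "f t - f s = (\<Sum>i<n. f (p (Suc i)) - f (p i))"
    using sum_lessThan_telescope[of "\<lambda>i. f (p i)" n] n unfolding p_def by simp
  also have "\<dots> \<le> (\<Sum>i<n. modcont f \<delta>)"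
  proof (rule sum_mono)
    fix i assume "i \<in> {..<n}"
    moreover have "\<bar>p (Suc i) - p i\<bar> \<le> \<delta>"
      using dist n unfolding p_step by (simp add: abs_div divide_le_eq mult.commute)
    ultimately have "\<bar>f (p (Suc i)) - f (p i)\<bar> \<le> modcont f \<delta>"
      by (intro modcont_upper[OF f \<delta> p_in p_in]) auto
    then show "f (p (Suc i)) - f (p i) \<le> modcont f \<delta>" by simp
  qed
  finally show ?thesis by simp
qed

lemma modcont_quadratic_bound:
  assumes f: "continuous_on {0..1} f" and \<delta>: "\<delta> > 0" and st: "s \<in> {0..1}" "t \<in> {0..1}"
  shows "f t - f s \<le> modcont f \<delta> + (modcont f \<delta> / \<delta>\<^sup>2) * (t - s)\<^sup>2"
proof (cases "\<bar>t - s\<bar> \<le> \<delta>")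
  case True
  then have "f t - f s \<le> modcont f \<delta>" using modcont_upper[OF f \<delta> st(2,1)] by simp
  moreover have "0 \<le> (modcont f \<delta> / \<delta>\<^sup>2) * (t - s)\<^sup>2"
    using modcont_nonneg[OF f, of \<delta>] \<delta> by simp
  ultimately show ?thesis by simp
next
  case False
  define r where "r = \<bar>t - s\<bar> / \<delta>"
  have r: "r > 1" unfolding r_def using False \<delta> by (simp add: less_divide_eq)
  define n where "n = nat \<lceil>r\<rceil>"
  have "r \<le> r\<^sup>2" using r by (simp add: power2_eq_square mult_le_cancel_left1)
  then have n: "n \<ge> 1" "r \<le> real n" "real n \<le> 1 + r\<^sup>2"
    unfolding n_def using r by linarith+
  have "\<bar>t - s\<bar> \<le> real n * \<delta>" using n(2) \<delta> unfolding r_def by (simp add: divide_le_eq)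
  then have "f t - f s \<le> real n * modcont f \<delta>"
    using modcont_telescope[OF f \<delta> st n(1)] by simp
  also have "\<dots> \<le> (1 + r\<^sup>2) * modcont f \<delta>"
    using n(3) modcont_nonneg[OF f, of \<delta>] \<delta> by (intro mult_right_mono) auto
  also have "\<dots> = modcont f \<delta> + (modcont f \<delta> / \<delta>\<^sup>2) * (t - s)\<^sup>2"
    unfolding r_def using \<delta> by (simp add: field_simps)
  finally show ?thesis .
qed

context
  fixes P R :: "(real \<Rightarrow> real) \<Rightarrow> (real \<Rightarrow> real)"
  assumes cP: "maps_C01 P" and wP: "weakly_nonlinear P" and mP: "monotone01 P"
    and cR: "maps_C01 R" and wR: "weakly_nonlinear R" and mR: "monotone01 R"
begin

lemma abs_commutator_le_cross_moment_norm:
  assumes f: "f \<in> C01" and x: "x \<in> {0..1}" and c: "c \<ge> 0"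
    and quadratic_bound: "\<forall>s\<in>{0..1}. \<forall>t\<in>{0..1}. f t - f s \<le> E + c * (t - s)\<^sup>2"
  shows "\<bar>R (\<lambda>_. 1) x * P f x - P (\<lambda>_. 1) x * R f x\<bar>
           \<le> P (\<lambda>_. 1) x * R (\<lambda>_. 1) x * E + c * norm01 (cross_moment P R)"
proof -
  have "c * cross_moment P R x \<le> c * norm01 (cross_moment P R)"
    using norm01_upper[OF cross_moment_continuous[OF cP cR] x] c
    by (intro mult_left_mono) auto
  then show ?thesis
    using commutator_le_cross_moment[OF wP mP wR mR f x c quadratic_bound]
      commutator_le_cross_moment[OF wR mR wP mP f x c quadratic_bound]
    by (simp add: cross_moment_commute abs_le_iff algebra_simps)
qed

lemma abs_commutator_le_modcont:
  assumes f: "f \<in> C01" and x: "x \<in> {0..1}"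
  defines "\<mu> \<equiv> sqrt (norm01 (cross_moment P R))"
  shows "\<bar>R (\<lambda>_. 1) x * P f x - P (\<lambda>_. 1) x * R f x\<bar>
           \<le> (P (\<lambda>_. 1) x * R (\<lambda>_. 1) x + 1) * modcont f \<mu>"
proof -
  let ?D = "\<bar>R (\<lambda>_. 1) x * P f x - P (\<lambda>_. 1) x * R f x\<bar>"
  define ab where "ab = P (\<lambda>_. 1) x * R (\<lambda>_. 1) x"
  have ab: "ab \<ge> 0"
    using monotone01_one_nonneg[OF wP mP x] monotone01_one_nonneg[OF wR mR x] by (simp add: ab_def)
  have fc: "continuous_on {0..1} f" using f by (rule C01_continuous)
  have \<mu>2: "\<mu>\<^sup>2 = norm01 (cross_moment P R)"
    unfolding \<mu>_def by (simp add: norm01_nonneg[OF cross_moment_continuous[OF cP cR]])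
  have D_le: "?D \<le> ab * modcont f \<delta> + (modcont f \<delta> / \<delta>\<^sup>2) * \<mu>\<^sup>2" if "\<delta> > 0" for \<delta>
    unfolding ab_def \<mu>2 using modcont_quadratic_bound[OF fc that] modcont_nonneg[OF fc, of \<delta>] that
    by (intro abs_commutator_le_cross_moment_norm[OF f x]) auto
  show ?thesis
  proof (cases "\<mu> > 0")
    case True
    then show ?thesis using D_le[OF True] by (simp add: ab_def algebra_simps)
  next
    case False
    then have \<mu>: "\<mu> = 0"
      using norm01_nonneg[OF cross_moment_continuous[OF cP cR]] unfolding \<mu>_def by simp
    \<comment> \<open>Here \<open>\<omega>(f,0) = 0\<close>; the quadratic term vanishes for every \<open>\<delta> > 0\<close>, and \<open>\<omega>(f,\<delta>) \<rightarrow> 0\<close>.\<close>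
    have "?D \<le> 0"
    proof (rule field_le_epsilon)
      fix e :: real assume "e > 0"
      then obtain \<delta> where \<delta>: "\<delta> > 0" "modcont f \<delta> \<le> e / (ab + 1)"
        using modcont_tends_to_zero[OF fc, of "e / (ab + 1)"] ab by auto
      have "?D \<le> ab * modcont f \<delta>" using D_le[OF \<delta>(1)] \<mu> by simp
      also have "\<dots> \<le> ab * (e / (ab + 1))" using \<delta>(2) ab by (rule mult_left_mono)
      also have "\<dots> \<le> e" using ab \<open>e > 0\<close> by (simp add: field_simps)
      finally show "?D \<le> 0 + e" by simp
    qed
    then show ?thesis using \<mu> by (simp add: modcont_def)
  qed
qed

theorem norm01_diff_le:
  assumes f: "f \<in> C01" and R_pos: "\<forall>x\<in>{0..1}. R (\<lambda>_. 1) x > 0"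
  shows "norm01 (\<lambda>x. P f x - R f x)
           \<le> 1 / (INF x\<in>{0..1}. R (\<lambda>_. 1) x)
              * (norm01 (\<lambda>x. P (\<lambda>_. 1) x - R (\<lambda>_. 1) x) * norm01 (R f)
                 + (norm01 (\<lambda>x. P (\<lambda>_. 1) x * R (\<lambda>_. 1) x) + 1)
                   * modcont f (sqrt (norm01 (cross_moment P R))))"
    (is "_ \<le> _ * ?bound")
proof -
  have one: "(\<lambda>_::real. 1::real) \<in> C01" by (intro C01_continuous_intro continuous_intros)
  note cont = maps_C01_continuous[OF cR one] maps_C01_continuous[OF cR f]
    maps_C01_continuous[OF cP one]
  have cont_diff: "continuous_on {0..1} (\<lambda>x. P (\<lambda>_. 1) x - R (\<lambda>_. 1) x)"
    by (intro continuous_on_diff cont)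
  have cont_prod: "continuous_on {0..1} (\<lambda>x. P (\<lambda>_. 1) x * R (\<lambda>_. 1) x)"
    by (intro continuous_on_mult cont)
  obtain x0 where x0: "x0 \<in> {0..1}" "\<forall>y\<in>{0..1}. R (\<lambda>_. 1) x0 \<le> R (\<lambda>_. 1) y"
    using continuous_attains_inf[of "{0..1::real}" "R (\<lambda>_. 1)"] cont(1) by auto
  define m where "m = R (\<lambda>_. 1) x0"
  have m: "m > 0" using R_pos x0 unfolding m_def by auto
  have "(INF x\<in>{0..1}. R (\<lambda>_. 1) x) = m"
    unfolding m_def using x0
    by (intro antisym cINF_lower cINF_greatest bdd_belowI2[where m="R (\<lambda>_. 1) x0"]) auto
  moreover have "norm01 (\<lambda>x. P f x - R f x) \<le> ?bound / m"
  proof (rule norm01_least, rule ballI)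
    fix x :: real assume x: "x \<in> {0..1}"
    define a where "a = P (\<lambda>_. 1) x"
    define b where "b = R (\<lambda>_. 1) x"
    define D where "D = b * P f x - a * R f x"
    have b: "b > 0" "m \<le> b" using R_pos x0 x unfolding m_def b_def by auto
    have "\<bar>D\<bar> \<le> (a * b + 1) * modcont f (sqrt (norm01 (cross_moment P R)))"
      using abs_commutator_le_modcont[OF f x] unfolding D_def a_def b_def .
    also have "\<dots> \<le> (norm01 (\<lambda>x. P (\<lambda>_. 1) x * R (\<lambda>_. 1) x) + 1)
                     * modcont f (sqrt (norm01 (cross_moment P R)))"
      using norm01_upper[OF cont_prod x] modcont_nonneg[OF C01_continuous[OF f]]
        norm01_nonneg[OF cross_moment_continuous[OF cP cR]]
      unfolding a_def b_def by (intro mult_right_mono) auto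
    finally have D: "\<bar>D\<bar> \<le> \<dots>" .
    have "\<bar>(a - b) * R f x\<bar> \<le> norm01 (\<lambda>x. P (\<lambda>_. 1) x - R (\<lambda>_. 1) x) * norm01 (R f)"
      unfolding abs_mult a_def b_def
      by (intro mult_mono norm01_upper[OF cont_diff x] norm01_upper[OF cont(2) x]
          norm01_nonneg[OF cont_diff] abs_ge_zero)
    with D have num: "\<bar>D + (a - b) * R f x\<bar> \<le> ?bound"
      using abs_triangle_ineq[of D "(a - b) * R f x"] by linarith
    have "P f x - R f x = (D + (a - b) * R f x) / b"
      unfolding D_def using b by (simp add: field_simps)
    then have "\<bar>P f x - R f x\<bar> = \<bar>D + (a - b) * R f x\<bar> / b" using b by simp
    also have "\<dots> \<le> ?bound / b" using num b by (intro divide_right_mono) auto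
    also have "\<dots> \<le> ?bound / m" using num b m by (intro divide_left_mono) auto
    finally show "\<bar>P f x - R f x\<bar> \<le> ?bound / m" .
  qed
  ultimately show ?thesis by simp
qed

end

theorem corollary1:
  fixes A :: "(real \<Rightarrow> real) \<Rightarrow> (real \<Rightarrow> real)"
    and T :: "nat \<Rightarrow> (real \<Rightarrow> real) \<Rightarrow> (real \<Rightarrow> real)"
  assumes "maps_C01 A" "weakly_nonlinear A" "monotone01 A"
    and "\<forall>x\<in>{0..1}. A (\<lambda>_. 1) x > 0"
    and "\<And>n. n \<ge> 1 \<Longrightarrow> maps_C01 (T n) \<and> weakly_nonlinear (T n) \<and> monotone01 (T n)"
  defines "M \<equiv> 1 / (INF x\<in>{0..1}. A (\<lambda>_. 1) x)"
    and "\<mu> \<equiv> (\<lambda>n. sqrt (norm01 (\<lambda>x. T n (\<lambda>t. t ^ 2) x * A (\<lambda>_. 1) x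
              - 2 * T n (\<lambda>t. - t) x * A (\<lambda>t. - t) x + T n (\<lambda>_. 1) x * A (\<lambda>t. t ^ 2) x)))"
  shows "\<forall>f\<in>C01. \<forall>n\<ge>1.
     norm01 (\<lambda>x. T n f x - A f x) \<le>
       M * (norm01 (\<lambda>x. T n (\<lambda>_. 1) x - A (\<lambda>_. 1) x) * norm01 (A f)
            + (norm01 (\<lambda>x. T n (\<lambda>_. 1) x * A (\<lambda>_. 1) x) + 1) * modcont f (\<mu> n))
     \<and> ((\<forall>x\<in>{0..1}. T n (\<lambda>_. 1) x = A (\<lambda>_. 1) x) \<longrightarrow>
        norm01 (\<lambda>x. T n f x - A f x) \<le>
          M * (norm01 (\<lambda>x. (A (\<lambda>_. 1) x) ^ 2) + 1) * modcont f (\<mu> n))"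
proof (intro ballI allI impI conjI)
  fix f n assume f: "f \<in> C01" and n: "(n::nat) \<ge> 1"
  have \<mu>: "\<mu> n = sqrt (norm01 (cross_moment (T n) A))"
    unfolding \<mu>_def cross_moment_def ..
  show bound: "norm01 (\<lambda>x. T n f x - A f x) \<le>
       M * (norm01 (\<lambda>x. T n (\<lambda>_. 1) x - A (\<lambda>_. 1) x) * norm01 (A f)
            + (norm01 (\<lambda>x. T n (\<lambda>_. 1) x * A (\<lambda>_. 1) x) + 1) * modcont f (\<mu> n))"
    using norm01_diff_le[of "T n" A f] assms(1-5) n f unfolding M_def \<mu> by blast
  assume "\<forall>x\<in>{0..1}. T n (\<lambda>_. 1) x = A (\<lambda>_. 1) x"
  then have "norm01 (\<lambda>x. T n (\<lambda>_. 1) x - A (\<lambda>_. 1) x) = norm01 (\<lambda>_. 0)"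
    and "norm01 (\<lambda>x. T n (\<lambda>_. 1) x * A (\<lambda>_. 1) x) = norm01 (\<lambda>x. (A (\<lambda>_. 1) x) ^ 2)"
    by (auto intro!: norm01_cong simp: power2_eq_square)
  with bound show "norm01 (\<lambda>x. T n f x - A f x) \<le>
      M * (norm01 (\<lambda>x. (A (\<lambda>_. 1) x) ^ 2) + 1) * modcont f (\<mu> n)"
    by (simp add: norm01_def mult.assoc)
qed

end
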